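(* Let $d,n\in\mathbb{N}$, $\mathbb{Z}_+=\{0,1,\ldots\}$, $\|x\|_\infty=\max_i|x_i|$, $x\sim y$ iff $|x-y|=1$ (Euclidean norm). Define $u_n:\mathbb{Z}_+^d\to\mathbb{R}$ by $u_n(x)=1$ if $\|x\|_\infty\le n$ and $u_n(x)=0$ otherwise. Then for $t>0$ and $0<p<\infty$, \[\sum_{j\in\mathbb{Z}_+^d\setminus\{0\}}\frac{|u_n(j)|^p}{\|j\|_\infty^t}\ge\begin{cases}\frac{d}{d-t}n^{d-t},&\text{if }d-t\ge1,\\ \frac{d}{|d-t|}\,|(n+1)^{d-t}-1|,&\text{if }d-t<1,\ d-t\ne0,\\ d\ln(n+1),&\text{if }d-t=0,\end{cases}\] and \[\sum_{x\in\mathbb{Z}_+^d}\ \sum_{\substack{y\in\mathbb{Z}_+^d\\ y\sim x}}|u_n(x)-u_n(y)|^p\le\begin{cases}2dn^{d-1}+2^{d+1}dn^{d-2},&\text{if }d\ge2,\\ 2dn^{d-1},&\text{if }d=1.\end{cases}\] *)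

theory Defs
  imports "HOL-Analysis.Analysis"
begin

text \<open>Points of Z_+^d are represented as functions nat => nat vanishing at all
coordinates i >= d (coordinates are indexed 0..d-1).\<close>

definition Zplus :: "nat \<Rightarrow> (nat \<Rightarrow> nat) set" where
  "Zplus d = {x. \<forall>i\<ge>d. x i = 0}"

definition supnorm :: "nat \<Rightarrow> (nat \<Rightarrow> nat) \<Rightarrow> real" where
  "supnorm d x = real (Max (x ` {..<d}))"

definition eucl_dist :: "nat \<Rightarrow> (nat \<Rightarrow> nat) \<Rightarrow> (nat \<Rightarrow> nat) \<Rightarrow> real" where
  "eucl_dist d x y = sqrt (\<Sum>i<d. (real (x i) - real (y i))^2)"

definition adj :: "nat \<Rightarrow> (nat \<Rightarrow> nat) \<Rightarrow> (nat \<Rightarrow> nat) \<Rightarrow> bool" where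
  "adj d x y \<longleftrightarrow> eucl_dist d x y = 1"

definition u :: "nat \<Rightarrow> nat \<Rightarrow> (nat \<Rightarrow> nat) \<Rightarrow> real" where
  "u d n x = (if supnorm d x \<le> real n then 1 else 0)"

end

theory Submission
  imports Defs "HOL-Analysis.Harmonic_Numbers"
begin

text \<open>Since u_n is the indicator of the cube [0,n]^d, both sums are finite.
The points j with j_i = k and all other coordinates below k have sup norm k;
for 1 \<le> k \<le> n and i < d these k^(d-1)-element sets are pairwise disjoint
and lie in the cube, so the first sum is at least d \<Sum>_{k=1..n} k^(d-t-1).
Comparing this power sum with \<integral> x^(d-t-1) dx via the mean value theorem
(and with H_n \<ge> ln (n+1) when d = t) gives the lower bound.
In the second sum, only ordered pairs of neighbours with exactly one point in the
cube contribute, each with weight 1. Such an edge leaves the cube through a point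
on one of the d faces {x_i = n}, each with (n+1)^(d-1) points, which bounds the sum
by 2d (n+1)^(d-1) \<le> 2d n^(d-1) + 2^(d+1) d n^(d-2).\<close>

section \<open>Power sums\<close>

lemma powr_diff_mean_value:
  fixes a b s :: real
  assumes "0 < a" and "a < b"
  obtains z where "a < z" and "z < b" and "b powr s - a powr s = (b - a) * s * z powr (s - 1)"
proof -
  have "\<exists>z. a < z \<and> z < b \<and> b powr s - a powr s = (b - a) * (s * z powr (s - 1))"
    using assms by (intro MVT2) (auto intro!: has_real_derivative_powr)
  then show ?thesis
    using that by (auto simp: mult.assoc)
qed

lemma powr_diff_le_of_ge_1:
  fixes a b s :: real
  assumes "s \<ge> 1" and "0 \<le> a" and "a \<le> b"
  shows "b powr s - a powr s \<le> s * (b - a) * b powr (s - 1)"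
proof (cases "a = 0 \<or> a = b")
  case True
  have "b powr s \<le> s * (b * b powr (s - 1))"
    using assms by (cases "b = 0") (simp_all add: powr_mult_base)
  with True assms show ?thesis
    by (auto simp: mult.assoc)
next
  case False
  then have "0 < a" "a < b"
    using assms by auto
  then obtain z where z: "a < z" "z < b" "b powr s - a powr s = (b - a) * s * z powr (s - 1)"
    by (rule powr_diff_mean_value)
  have "z powr (s - 1) \<le> b powr (s - 1)"
    using z assms by (intro powr_mono2) auto
  with z assms show ?thesis
    by (simp add: mult.commute mult_left_mono)
qed

lemma powr_diff_div_le_of_le_1:
  fixes a b s :: real
  assumes "s \<le> 1" and "s \<noteq> 0" and "0 < a" and "a \<le> b"
  shows "(b powr s - a powr s) / s \<le> (b - a) * a powr (s - 1)"
proof (cases "a = b")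
  case False
  then have "0 < a" "a < b"
    using assms by auto
  then obtain z where z: "a < z" "z < b" "b powr s - a powr s = (b - a) * s * z powr (s - 1)"
    by (rule powr_diff_mean_value)
  have "z powr (s - 1) \<le> a powr (s - 1)"
    using z assms by (intro powr_mono2') auto
  with z assms show ?thesis
    by (simp add: mult_left_mono)
qed simp

lemma sum_powr_ge_of_ge_1:
  fixes s :: real
  assumes "s \<ge> 1"
  shows "real n powr s / s \<le> (\<Sum>k=1..n. real k powr (s - 1))"
proof -
  have "real n powr s = (\<Sum>k<n. real (Suc k) powr s - real k powr s)"
    using sum_lessThan_telescope[of "\<lambda>k. real k powr s" n] assms by simp
  also have "\<dots> \<le> (\<Sum>k<n. s * real (Suc k) powr (s - 1))"
  proof (rule sum_mono)
    fix k
    show "real (Suc k) powr s - real k powr s \<le> s * real (Suc k) powr (s - 1)"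
      using powr_diff_le_of_ge_1[OF assms, of "real k" "real (Suc k)"] by simp
  qed
  also have "\<dots> = s * (\<Sum>k=1..n. real k powr (s - 1))"
    by (subst sum_bounds_lt_plus1[symmetric]) (simp add: sum_distrib_left)
  finally show ?thesis
    using assms by (simp add: divide_le_eq mult.commute)
qed

lemma sum_powr_ge_of_lt_1:
  fixes s :: real
  assumes "s < 1" and "s \<noteq> 0"
  shows "((real n + 1) powr s - 1) / s \<le> (\<Sum>k=1..n. real k powr (s - 1))"
proof -
  have "((real n + 1) powr s - 1) / s = (\<Sum>k<n. (real (Suc (Suc k)) powr s - real (Suc k) powr s) / s)"
    using sum_lessThan_telescope[of "\<lambda>k. real (Suc k) powr s" n]
    by (simp add: sum_divide_distrib[symmetric] add.commute)
  also have "\<dots> \<le> (\<Sum>k<n. real (Suc k) powr (s - 1))"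
  proof (rule sum_mono)
    fix k
    show "(real (Suc (Suc k)) powr s - real (Suc k) powr s) / s \<le> real (Suc k) powr (s - 1)"
      using powr_diff_div_le_of_le_1[of s "real (Suc k)" "real (Suc (Suc k))"] assms by simp
  qed
  also have "\<dots> = (\<Sum>k=1..n. real k powr (s - 1))"
    by (rule sum_bounds_lt_plus1)
  finally show ?thesis .
qed

lemma ln_le_sum_powr_minus_one: "ln (real n + 1) \<le> (\<Sum>k=1..n. real k powr (- 1))"
  using ln_le_harm[of n] by (simp add: harm_def powr_minus)

lemma sum_powr_lower_bound:
  fixes s :: real
  shows "(if s \<ge> 1 then real n powr s / s
          else if s \<noteq> 0 then \<bar>(real n + 1) powr s - 1\<bar> / \<bar>s\<bar>
          else ln (real n + 1))
         \<le> (\<Sum>k=1..n. real k powr (s - 1))"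
proof -
  consider "s \<ge> 1" | "s < 1" "s \<noteq> 0" | "s = 0"
    by linarith
  then show ?thesis
  proof cases
    case 1
    then show ?thesis
      using sum_powr_ge_of_ge_1 by simp
  next
    case 2
    have "((real n + 1) powr s - 1) / s \<ge> 0"
    proof (cases "s > 0")
      case True
      then show ?thesis
        by (simp add: ge_one_powr_ge_zero)
    next
      case False
      then have "(real n + 1) powr s \<le> (real n + 1) powr 0"
        by (intro powr_mono) auto
      then have "(real n + 1) powr s \<le> 1"
        by simp
      with False show ?thesis
        by (simp add: divide_nonpos_nonpos)
    qed
    then have "\<bar>(real n + 1) powr s - 1\<bar> / \<bar>s\<bar> = ((real n + 1) powr s - 1) / s"
      by (metis abs_divide abs_of_nonneg)
    with 2 show ?thesis
      using sum_powr_ge_of_lt_1 by simp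
  next
    case 3
    then show ?thesis
      using ln_le_sum_powr_minus_one by simp
  qed
qed

lemma add_one_power_Suc_le:
  fixes x :: real
  assumes "x \<ge> 1"
  shows "(x + 1) ^ Suc m \<le> x ^ Suc m + (2 ^ Suc m - 1) * x ^ m"
proof (induction m)
  case (Suc m)
  have "x ^ m \<le> x ^ Suc m" and "(2::real) ^ Suc m - 1 \<ge> 0"
    using assms one_le_power[of "2::real" "Suc m"] by (simp_all add: power_increasing)
  then have mono: "(2 ^ Suc m - 1) * x ^ m \<le> (2 ^ Suc m - 1) * x ^ Suc m"
    by (rule mult_left_mono)
  have "(x + 1) ^ Suc (Suc m) = (x + 1) * (x + 1) ^ Suc m"
    by (rule power_Suc)
  also have "\<dots> \<le> (x + 1) * (x ^ Suc m + (2 ^ Suc m - 1) * x ^ m)"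
    using Suc assms by (intro mult_left_mono) auto
  also have "\<dots> \<le> x ^ Suc (Suc m) + (2 ^ Suc (Suc m) - 1) * x ^ Suc m"
    using mono by (simp add: algebra_simps)
  finally show ?case .
qed simp

lemma add_one_power_le:
  fixes x :: real
  assumes "d \<ge> 2" and "x \<ge> 1"
  shows "(x + 1) ^ (d - 1) \<le> x ^ (d - 1) + 2 ^ d * x ^ (d - 2)"
proof -
  obtain m where m: "d = Suc (Suc m)"
    using assms(1) by (metis add_2_eq_Suc le_Suc_ex)
  have "(x + 1) ^ Suc m \<le> x ^ Suc m + (2 ^ Suc m - 1) * x ^ m"
    using assms(2) by (rule add_one_power_Suc_le)
  also have "\<dots> \<le> x ^ Suc m + 2 ^ Suc (Suc m) * x ^ m"
  proof (intro add_left_mono mult_right_mono)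
    show "(2::real) ^ Suc m - 1 \<le> 2 ^ Suc (Suc m)"
      using zero_le_power[of "2::real" m] by (simp only: power_Suc) linarith
  qed (use assms(2) in simp)
  finally show ?thesis
    using m by simp
qed

section \<open>Lattice boxes\<close>

definition lattice_box :: "nat \<Rightarrow> (nat \<Rightarrow> nat set) \<Rightarrow> (nat \<Rightarrow> nat) set" where
  "lattice_box d S = {x \<in> Zplus d. \<forall>i<d. x i \<in> S i}"

abbreviation cube :: "nat \<Rightarrow> nat \<Rightarrow> (nat \<Rightarrow> nat) set" where
  "cube d m \<equiv> lattice_box d (\<lambda>_. {..m})"

lemma bij_betw_restrict_lattice_box:
  "bij_betw (\<lambda>x. restrict x {..<d}) (lattice_box d S) (\<Pi>\<^sub>E i\<in>{..<d}. S i)"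
  by (rule bij_betw_byWitness[where f' = "\<lambda>f i. if i < d then f i else 0"])
     (auto simp: lattice_box_def Zplus_def fun_eq_iff PiE_def extensional_def)

lemma card_lattice_box: "card (lattice_box d S) = (\<Prod>i<d. card (S i))"
  using bij_betw_same_card[OF bij_betw_restrict_lattice_box] by (simp add: card_PiE)

lemma finite_lattice_box:
  assumes "\<And>i. i < d \<Longrightarrow> finite (S i)"
  shows "finite (lattice_box d S)"
proof -
  have "finite (\<Pi>\<^sub>E i\<in>{..<d}. S i)"
    using assms by (intro finite_PiE) auto
  then show ?thesis
    using bij_betw_finite[OF bij_betw_restrict_lattice_box] by simp
qed

lemma card_lattice_box_slice:
  assumes "i < d"
  shows "card (lattice_box d (\<lambda>l. if l = i then {a} else B)) = card B ^ (d - 1)"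
proof -
  have "(\<Prod>l<d. card (if l = i then {a} else B)) = (\<Prod>l<d. if l = i then 1 else card B)"
    by (rule prod.cong) auto
  also have "\<dots> = card B ^ (d - 1)"
    using assms by (simp add: prod.If_cases Diff_eq[symmetric])
  finally show ?thesis
    by (simp add: card_lattice_box)
qed

lemma supnorm_le_iff:
  assumes "d \<ge> 1"
  shows "supnorm d x \<le> real m \<longleftrightarrow> (\<forall>i<d. x i \<le> m)"
proof -
  have "x ` {..<d} \<noteq> {}"
    using assms by (simp add: lessThan_empty_iff)
  then show ?thesis
    by (auto simp: supnorm_def Max_le_iff)
qed

lemma u_eq_indicator: "d \<ge> 1 \<Longrightarrow> x \<in> Zplus d \<Longrightarrow> u d n x = of_bool (x \<in> cube d n)"
  by (simp add: u_def supnorm_le_iff lattice_box_def)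

section \<open>Shells of the cube\<close>

definition shell_face :: "nat \<Rightarrow> nat \<Rightarrow> nat \<Rightarrow> (nat \<Rightarrow> nat) set" where
  "shell_face d k i = lattice_box d (\<lambda>l. if l = i then {k} else {..<k})"

lemma card_shell_face: "i < d \<Longrightarrow> card (shell_face d k i) = k ^ (d - 1)"
  unfolding shell_face_def by (simp add: card_lattice_box_slice)

lemma finite_shell_face: "finite (shell_face d k i)"
  unfolding shell_face_def by (intro finite_lattice_box) auto

lemma mem_shell_face:
  assumes "i < d"
  shows "j \<in> shell_face d k i \<longleftrightarrow> j \<in> Zplus d \<and> j i = k \<and> (\<forall>l<d. l \<noteq> i \<longrightarrow> j l < k)"
  using assms by (auto simp: shell_face_def lattice_box_def)

lemma supnorm_shell_face:
  assumes "i < d" and "j \<in> shell_face d k i"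
  shows "supnorm d j = real k"
proof -
  have "Max (j ` {..<d}) = k"
    using assms by (intro Max_eqI) (auto simp: mem_shell_face less_imp_le_nat)
  then show ?thesis
    by (simp add: supnorm_def)
qed

lemma shell_face_subset_cube:
  assumes "i < d" and "1 \<le> k" and "k \<le> n"
  shows "shell_face d k i \<subseteq> cube d n - {\<lambda>_. 0}"
  using assms by (fastforce simp: mem_shell_face lattice_box_def)

lemma shell_faces_disjoint:
  assumes "i < d" and "i' < d" and "(k, i) \<noteq> (k', i')"
  shows "shell_face d k i \<inter> shell_face d k' i' = {}"
proof safe
  fix j assume j: "j \<in> shell_face d k i" "j \<in> shell_face d k' i'"
  then have "k = k'"
    using supnorm_shell_face assms by (metis of_nat_eq_iff)
  with j assms show "j \<in> {}"
    by (auto simp: mem_shell_face)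
qed

lemma sum_powr_le_sum_cube_supnorm:
  assumes "d \<ge> 1"
  shows "real d * (\<Sum>k=1..n. real k powr (real d - t - 1))
           \<le> (\<Sum>j\<in>cube d n - {\<lambda>_. 0}. 1 / supnorm d j powr t)"
proof -
  let ?I = "{1..n} \<times> {..<d}"
  let ?F = "\<lambda>j. 1 / supnorm d j powr t"
  have face_sum: "sum ?F (shell_face d k i) = real k powr (real d - t - 1)"
    if "(k, i) \<in> ?I" for k i
  proof -
    have "sum ?F (shell_face d k i) = (\<Sum>j\<in>shell_face d k i. 1 / real k powr t)"
      using that by (intro sum.cong) (auto simp: supnorm_shell_face)
    also have "\<dots> = real k ^ (d - 1) / real k powr t"
      using that by (simp add: card_shell_face)
    also have "\<dots> = real k powr (real d - 1) / real k powr t"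
      using that assms by (simp add: powr_realpow[symmetric] of_nat_diff)
    also have "\<dots> = real k powr (real d - 1 - t)"
      by (rule powr_diff[symmetric])
    also have "\<dots> = real k powr (real d - t - 1)"
      by (simp add: algebra_simps)
    finally show ?thesis .
  qed
  have "real d * (\<Sum>k=1..n. real k powr (real d - t - 1))
          = (\<Sum>(k, i)\<in>?I. real k powr (real d - t - 1))"
    by (simp add: sum.cartesian_product[symmetric] sum_distrib_left mult.commute)
  also have "\<dots> = (\<Sum>(k, i)\<in>?I. sum ?F (shell_face d k i))"
    using face_sum by (intro sum.cong) auto
  also have "\<dots> = sum ?F (\<Union>(k, i)\<in>?I. shell_face d k i)"
    using shell_faces_disjoint
    by (subst sum.UNION_disjoint) (auto simp: finite_shell_face case_prod_unfold)
  also have "\<dots> \<le> sum ?F (cube d n - {\<lambda>_. 0})"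
  proof (rule sum_mono2)
    show "finite (cube d n - {\<lambda>_. 0})"
      by (intro finite_Diff finite_lattice_box) auto
    show "(\<Union>(k, i)\<in>?I. shell_face d k i) \<subseteq> cube d n - {\<lambda>_. 0}"
      using shell_face_subset_cube by (clarsimp; blast)
  qed simp
  finally show ?thesis .
qed

lemma infsum_u_div_supnorm:
  assumes "d \<ge> 1"
  shows "(\<Sum>\<^sub>\<infinity>j\<in>Zplus d - {\<lambda>_. 0}. \<bar>u d n j\<bar> powr p / supnorm d j powr t)
           = (\<Sum>j\<in>cube d n - {\<lambda>_. 0}. 1 / supnorm d j powr t)"
proof -
  have "(\<Sum>\<^sub>\<infinity>j\<in>Zplus d - {\<lambda>_. 0}. \<bar>u d n j\<bar> powr p / supnorm d j powr t)
          = (\<Sum>\<^sub>\<infinity>j\<in>cube d n - {\<lambda>_. 0}. 1 / supnorm d j powr t)"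
    using assms by (intro infsum_cong_neutral) (auto simp: u_eq_indicator lattice_box_def)
  then show ?thesis
    by (simp add: finite_lattice_box)
qed

section \<open>Edges leaving the cube\<close>

lemma sum_squares_int_eq_1:
  fixes f :: "'a \<Rightarrow> int"
  assumes "finite I" and "(\<Sum>l\<in>I. (f l)\<^sup>2) = 1"
  obtains i where "i \<in> I" and "\<bar>f i\<bar> = 1" and "\<And>l. l \<in> I - {i} \<Longrightarrow> f l = 0"
proof -
  obtain i where i: "i \<in> I" "f i \<noteq> 0"
    using assms(2) by (metis (mono_tags, lifting) sum.neutral zero_neq_one zero_power2)
  have split: "(\<Sum>l\<in>I. (f l)\<^sup>2) = (f i)\<^sup>2 + (\<Sum>l\<in>I - {i}. (f l)\<^sup>2)"
    using assms(1) i(1) by (rule sum.remove)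
  have "(f i)\<^sup>2 \<ge> 1"
    using i(2) by (simp add: int_one_le_iff_zero_less)
  moreover have rest: "(\<Sum>l\<in>I - {i}. (f l)\<^sup>2) \<ge> 0"
    by (intro sum_nonneg) simp
  ultimately have "(f i)\<^sup>2 = 1" and "(\<Sum>l\<in>I - {i}. (f l)\<^sup>2) = 0"
    using assms(2) split by linarith+
  then show ?thesis
    using that i(1) assms(1) by (simp add: sum_nonneg_eq_0_iff abs_square_eq_1)
qed

lemma adj_sym: "adj d x y \<longleftrightarrow> adj d y x"
  unfolding adj_def eucl_dist_def by (simp add: power2_commute)

lemma adj_unit_step:
  assumes "x \<in> Zplus d" and "y \<in> Zplus d" and "adj d x y"
  obtains i where "i < d" and "\<bar>int (x i) - int (y i)\<bar> = 1" and "\<And>l. l \<noteq> i \<Longrightarrow> x l = y l"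
proof -
  have "real_of_int (\<Sum>l<d. (int (x l) - int (y l))\<^sup>2) = 1"
    using assms(3) by (simp add: adj_def eucl_dist_def)
  then have "(\<Sum>l<d. (int (x l) - int (y l))\<^sup>2) = 1"
    by linarith
  then obtain i where i: "i \<in> {..<d}" "\<bar>int (x i) - int (y i)\<bar> = 1"
    and other: "\<And>l. l \<in> {..<d} - {i} \<Longrightarrow> int (x l) - int (y l) = 0"
    by (rule sum_squares_int_eq_1[OF finite_lessThan]) blast
  have "x l = y l" if "l \<noteq> i" for l
    using other[of l] that assms(1,2) by (cases "l < d") (auto simp: Zplus_def)
  with i that show ?thesis
    by simp
qed

lemma adj_leaving_cube:
  assumes "x \<in> cube d n" and "y \<in> Zplus d" and "y \<notin> cube d n" and "adj d x y"
  shows "\<exists>i<d. x i = n \<and> y = x(i := Suc n)"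
proof -
  have x: "x \<in> Zplus d" "\<And>l. l < d \<Longrightarrow> x l \<le> n"
    using assms(1) by (auto simp: lattice_box_def)
  obtain i where i: "i < d" "\<bar>int (x i) - int (y i)\<bar> = 1" and same: "\<And>l. l \<noteq> i \<Longrightarrow> x l = y l"
    using adj_unit_step[OF x(1) assms(2,4)] by blast
  obtain l where "l < d" "y l > n"
    using assms(2,3) by (auto simp: lattice_box_def not_le)
  then have "y i > n"
    using x(2) same by (cases "l = i") force+
  then have "x i = n" and "y i = Suc n"
    using i x(2)[of i] by linarith+
  then have "y = x(i := Suc n)"
    using same by fastforce
  with i \<open>x i = n\<close> show ?thesis
    by blast
qed

definition boundary_edges :: "nat \<Rightarrow> nat \<Rightarrow> ((nat \<Rightarrow> nat) \<times> (nat \<Rightarrow> nat)) set" where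
  "boundary_edges d n =
     {(x, y). x \<in> Zplus d \<and> y \<in> Zplus d \<and> adj d x y \<and> (x \<in> cube d n) \<noteq> (y \<in> cube d n)}"

definition outward_edges :: "nat \<Rightarrow> nat \<Rightarrow> ((nat \<Rightarrow> nat) \<times> (nat \<Rightarrow> nat)) set" where
  "outward_edges d n = (\<lambda>(i, x). (x, x(i := Suc n))) `
     (SIGMA i:{..<d}. lattice_box d (\<lambda>l. if l = i then {n} else {..n}))"

lemma finite_outward_edges: "finite (outward_edges d n)"
  unfolding outward_edges_def by (intro finite_imageI finite_SigmaI finite_lattice_box) auto

lemma card_outward_edges_le: "card (outward_edges d n) \<le> d * (n + 1) ^ (d - 1)"
proof -
  have "card (outward_edges d n)
          \<le> card (SIGMA i:{..<d}. lattice_box d (\<lambda>l. if l = i then {n} else {..n}))"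
    unfolding outward_edges_def by (rule card_image_le) (intro finite_SigmaI finite_lattice_box; simp)
  also have "\<dots> = (\<Sum>i<d. card (lattice_box d (\<lambda>l. if l = i then {n} else {..n})))"
    by (intro card_SigmaI) (auto intro!: finite_lattice_box)
  also have "\<dots> = d * (n + 1) ^ (d - 1)"
    by (simp add: card_lattice_box_slice)
  finally show ?thesis .
qed

lemma boundary_edges_subset:
  "boundary_edges d n \<subseteq> outward_edges d n \<union> prod.swap ` outward_edges d n"
proof -
  have out: "(x, y) \<in> outward_edges d n"
    if xy: "x \<in> cube d n" "y \<in> Zplus d" "y \<notin> cube d n" "adj d x y" for x y
  proof -
    obtain i where "i < d" "x i = n" "y = x(i := Suc n)"
      using adj_leaving_cube[OF xy] by blast
    with xy(1) show ?thesis
      unfolding outward_edges_def by (force simp: lattice_box_def)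
  qed
  show ?thesis
  proof
    fix e assume "e \<in> boundary_edges d n"
    then obtain x y where e: "e = (x, y)" "x \<in> Zplus d" "y \<in> Zplus d" "adj d x y"
      "(x \<in> cube d n) \<noteq> (y \<in> cube d n)"
      by (auto simp: boundary_edges_def)
    then have "(x, y) \<in> outward_edges d n \<or> (y, x) \<in> outward_edges d n"
      using out[of x y] out[of y x] adj_sym by blast
    then show "e \<in> outward_edges d n \<union> prod.swap ` outward_edges d n"
      using e(1) by force
  qed
qed

lemma finite_boundary_edges: "finite (boundary_edges d n)"
  by (rule finite_subset[OF boundary_edges_subset]) (simp add: finite_outward_edges)

lemma card_boundary_edges_le: "card (boundary_edges d n) \<le> 2 * d * (n + 1) ^ (d - 1)"
proof -
  have "card (boundary_edges d n) \<le> card (outward_edges d n) + card (prod.swap ` outward_edges d n)"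
    using boundary_edges_subset finite_outward_edges
    by (meson card_Un_le card_mono finite_UnI finite_imageI order_trans)
  also have "\<dots> \<le> 2 * card (outward_edges d n)"
    by (simp add: card_image_le finite_outward_edges)
  finally show ?thesis
    using card_outward_edges_le[of d n] by linarith
qed

lemma infsum_infsum_of_bool:
  assumes "finite P"
  shows "(\<Sum>\<^sub>\<infinity>x\<in>X. \<Sum>\<^sub>\<infinity>y\<in>Y x. of_bool ((x, y) \<in> P)) = real (card (P \<inter> Sigma X Y))"
proof -
  define R where "R x = {y \<in> Y x. (x, y) \<in> P}" for x
  have fst_mem: "x \<in> fst ` P" if "(x, y) \<in> P" for x y
    using that by (simp add: rev_image_eqI)
  have R_empty: "R x = {}" if "x \<notin> fst ` P" for x
    using that fst_mem by (auto simp: R_def)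
  have "R x \<subseteq> snd ` P" for x
    by (auto simp: R_def rev_image_eqI)
  then have fin_R: "finite (R x)" for x
    using assms by (meson finite_imageI finite_subset)
  have inner: "(\<Sum>\<^sub>\<infinity>y\<in>Y x. of_bool ((x, y) \<in> P)) = real (card (R x))" for x
  proof -
    have "(\<Sum>\<^sub>\<infinity>y\<in>Y x. of_bool ((x, y) \<in> P)) = (\<Sum>\<^sub>\<infinity>y\<in>R x. 1 :: real)"
      by (intro infsum_cong_neutral) (auto simp: R_def)
    then show ?thesis
      using fin_R by simp
  qed
  have "(\<Sum>\<^sub>\<infinity>x\<in>X. real (card (R x))) = (\<Sum>\<^sub>\<infinity>x\<in>X \<inter> fst ` P. real (card (R x)))"
    using R_empty by (intro infsum_cong_neutral) auto
  also have "\<dots> = real (\<Sum>x\<in>X \<inter> fst ` P. card (R x))"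
    using assms by simp
  also have "(\<Sum>x\<in>X \<inter> fst ` P. card (R x)) = card (Sigma (X \<inter> fst ` P) R)"
    using assms fin_R by (simp add: card_SigmaI)
  also have "Sigma (X \<inter> fst ` P) R = P \<inter> Sigma X Y"
    using fst_mem by (auto simp: R_def)
  finally show ?thesis
    by (simp add: inner)
qed

lemma infsum_adjacent_u_diff:
  assumes "d \<ge> 1"
  shows "(\<Sum>\<^sub>\<infinity>x\<in>Zplus d. \<Sum>\<^sub>\<infinity>y\<in>{y\<in>Zplus d. adj d x y}. \<bar>u d n x - u d n y\<bar> powr p)
           = real (card (boundary_edges d n))"
proof -
  have jump: "\<bar>u d n x - u d n y\<bar> powr p = of_bool ((x, y) \<in> boundary_edges d n)"
    if "x \<in> Zplus d" and "y \<in> {y\<in>Zplus d. adj d x y}" for x y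
    using that assms
    by (cases "x \<in> cube d n"; cases "y \<in> cube d n") (simp_all add: u_eq_indicator boundary_edges_def)
  have "(\<Sum>\<^sub>\<infinity>x\<in>Zplus d. \<Sum>\<^sub>\<infinity>y\<in>{y\<in>Zplus d. adj d x y}. \<bar>u d n x - u d n y\<bar> powr p)
          = (\<Sum>\<^sub>\<infinity>x\<in>Zplus d. \<Sum>\<^sub>\<infinity>y\<in>{y\<in>Zplus d. adj d x y}. of_bool ((x, y) \<in> boundary_edges d n))"
    using jump by (intro infsum_cong) simp
  also have "\<dots> = real (card (boundary_edges d n \<inter> (SIGMA x:Zplus d. {y\<in>Zplus d. adj d x y})))"
    by (rule infsum_infsum_of_bool[OF finite_boundary_edges])
  also have "boundary_edges d n \<inter> (SIGMA x:Zplus d. {y\<in>Zplus d. adj d x y}) = boundary_edges d n"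
    by (auto simp: boundary_edges_def)
  finally show ?thesis .
qed

lemma infsum_adjacent_u_diff_le:
  assumes "d \<ge> 1"
  shows "(\<Sum>\<^sub>\<infinity>x\<in>Zplus d. \<Sum>\<^sub>\<infinity>y\<in>{y\<in>Zplus d. adj d x y}. \<bar>u d n x - u d n y\<bar> powr p)
           \<le> 2 * real d * (real n + 1) ^ (d - 1)"
proof -
  have "real (card (boundary_edges d n)) \<le> real (2 * d * (n + 1) ^ (d - 1))"
    by (simp only: of_nat_le_iff card_boundary_edges_le)
  then show ?thesis
    by (simp add: infsum_adjacent_u_diff[OF assms] add.commute)
qed

theorem proposition3p1:
  fixes d n :: nat and t p :: real
  assumes "d \<ge> 1" and "n \<ge> 1" and "t > 0" and "p > 0"
  shows "((\<Sum>\<^sub>\<infinity>j\<in>Zplus d - {(\<lambda>_. 0)}. \<bar>u d n j\<bar> powr p / supnorm d j powr t)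
           \<ge> (if real d - t \<ge> 1 then real d / (real d - t) * real n powr (real d - t)
              else if real d - t \<noteq> 0
                then real d / \<bar>real d - t\<bar> * \<bar>(real n + 1) powr (real d - t) - 1\<bar>
              else real d * ln (real n + 1))) \<and>
         ((\<Sum>\<^sub>\<infinity>x\<in>Zplus d. \<Sum>\<^sub>\<infinity>y\<in>{y\<in>Zplus d. adj d x y}. \<bar>u d n x - u d n y\<bar> powr p)
           \<le> (if d \<ge> 2 then 2 * real d * real n ^ (d - 1) + 2 ^ (d + 1) * real d * real n ^ (d - 2)
              else 2 * real d * real n ^ (d - 1)))"
    (is "?lower \<le> ?sum1 \<and> ?sum2 \<le> ?upper")
proof
  let ?s = "real d - t"
  have "?lower = real d * (if ?s \<ge> 1 then real n powr ?s / ?s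
                          else if ?s \<noteq> 0 then \<bar>(real n + 1) powr ?s - 1\<bar> / \<bar>?s\<bar>
                          else ln (real n + 1))"
    by simp
  also have "\<dots> \<le> real d * (\<Sum>k=1..n. real k powr (?s - 1))"
    by (intro mult_left_mono sum_powr_lower_bound) simp
  also have "\<dots> \<le> ?sum1"
    using sum_powr_le_sum_cube_supnorm[OF assms(1)] infsum_u_div_supnorm[OF assms(1)] by simp
  finally show "?lower \<le> ?sum1" .
next
  have "?sum2 \<le> 2 * real d * (real n + 1) ^ (d - 1)"
    by (rule infsum_adjacent_u_diff_le[OF assms(1)])
  also have "\<dots> \<le> ?upper"
  proof (cases "d \<ge> 2")
    case True
    then have "(real n + 1) ^ (d - 1) \<le> real n ^ (d - 1) + 2 ^ d * real n ^ (d - 2)"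
      using assms(2) by (intro add_one_power_le) auto
    then have "2 * real d * (real n + 1) ^ (d - 1)
                 \<le> 2 * real d * (real n ^ (d - 1) + 2 ^ d * real n ^ (d - 2))"
      by (rule mult_left_mono) simp
    with True show ?thesis
      by (simp add: algebra_simps)
  qed (use assms(1) in simp)
  finally show "?sum2 \<le> ?upper" .
qed

end
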